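(* Let $\rho\in[0,1)$. The nonlinear process started from $\eta(0)\sim\pi_\rho$ has the same law as the M/D/1 queue with arrival rate $\rho$ started from its stationary distribution $\pi_\rho$; in particular $\rho(t)=\rho$ for all $t$ and the nonlinear process is stationary. Conversely, if the nonlinear process (with arbitrary initial law on $\mathbb{Z}_+$) is stationary, then $\eta(0)\sim\pi_{\rho}$ for some $\rho\in[0,1)$ (namely $\rho=\mathbb{P}(\eta(0)>0)$).
   Context: The nonlinear process $(\eta(t))_{t\in\mathbb{Z}_+}$ takes values in $\mathbb{Z}_+$: $\eta(0)$ has a given distribution; given $\eta(t)$, set $\rho(t):=\mathbb{P}(\eta(t)>0)$, let $N_{t+1}$ be Poisson with mean $\rho(t)$ (mean $0$ meaning identically $0$), independent of everything before, and set $\eta(t+1):=\eta(t)-\mathbf{1}(\eta(t)>0)+N_{t+1}$. The M/D/1 queue with arrival rate $\rho\ge 0$ is the Markov chain $(\zeta(t))_{t\in\mathbb{Z}_+}$ on $\mathbb{Z}_+$ given by $\zeta(t+1):=\zeta(t)-\mathbf{1}(\zeta(t)>0)+M_{t+1}$, where $(M_t)_{t\ge1}$ are i.i.d. Poisson random variables with mean $\rho$, independent of $\zeta(0)$. For $\rho<1$ this chain is irreducible, aperiodic and positive recurrent; $\pi_\rho$ denotes its unique invariant probability measure. *)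

theory Defs
  imports "HOL-Probability.Probability"
begin

text \<open>Poisson law with mean r; mean 0 means identically 0.
  The library's poisson_pmf is only meaningful for positive rates.\<close>
definition pois :: "real \<Rightarrow> nat pmf" where
  "pois r = (if r = 0 then return_pmf 0 else poisson_pmf r)"

definition step_pmf :: "real \<Rightarrow> nat \<Rightarrow> nat pmf" where
  "step_pmf r n = map_pmf (\<lambda>k. n - (if n > 0 then 1 else 0) + k) (pois r)"

definition pos_prob :: "nat pmf \<Rightarrow> real" where
  "pos_prob \<mu> = measure_pmf.prob \<mu> {n. n > 0}"

primrec nl_marg :: "nat pmf \<Rightarrow> nat \<Rightarrow> nat pmf" where
  "nl_marg \<mu> 0 = \<mu>"
| "nl_marg \<mu> (Suc t) = bind_pmf (nl_marg \<mu> t) (step_pmf (pos_prob (nl_marg \<mu> t)))"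

definition nl_rho :: "nat pmf \<Rightarrow> nat \<Rightarrow> real" where
  "nl_rho \<mu> t = pos_prob (nl_marg \<mu> t)"

text \<open>Joint law of (eta(0),...,eta(n)) of the nonlinear process, as a list of length n+1.\<close>
primrec nl_path :: "nat pmf \<Rightarrow> nat \<Rightarrow> nat list pmf" where
  "nl_path \<mu> 0 = map_pmf (\<lambda>x. [x]) \<mu>"
| "nl_path \<mu> (Suc n) =
     bind_pmf (nl_path \<mu> n) (\<lambda>xs. map_pmf (\<lambda>y. xs @ [y]) (step_pmf (nl_rho \<mu> n) (last xs)))"

primrec md1_path :: "real \<Rightarrow> nat pmf \<Rightarrow> nat \<Rightarrow> nat list pmf" where
  "md1_path \<rho> \<mu> 0 = map_pmf (\<lambda>x. [x]) \<mu>"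
| "md1_path \<rho> \<mu> (Suc n) =
     bind_pmf (md1_path \<rho> \<mu> n) (\<lambda>xs. map_pmf (\<lambda>y. xs @ [y]) (step_pmf \<rho> (last xs)))"

definition md1_invariant :: "real \<Rightarrow> nat pmf \<Rightarrow> bool" where
  "md1_invariant \<rho> \<nu> \<longleftrightarrow> bind_pmf \<nu> (step_pmf \<rho>) = \<nu>"

definition md1_pi :: "real \<Rightarrow> nat pmf" where
  "md1_pi \<rho> = (THE \<nu>. md1_invariant \<rho> \<nu>)"

definition nl_stationary :: "nat pmf \<Rightarrow> bool" where
  "nl_stationary \<mu> \<longleftrightarrow> (\<forall>k n. map_pmf (drop k) (nl_path \<mu> (k + n)) = nl_path \<mu> n)"

end

theory Submission
  imports Defs
begin

text \<open>
  If the nonlinear process is stationary, its one-step law is the M/D/1 transition with the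
  constant rate \<open>\<rho> = P(\<eta>(0) > 0)\<close>, so \<open>\<eta>(0)\<close> is invariant for that queue. Conversely,
  every invariant law \<open>\<nu>\<close> of a queue whose arrivals have mean \<open>r\<close> satisfies
  \<open>\<nu>(0) = 1 - r\<close>: the balance equations are equivalent to level-crossing equations across
  each cut \<open>{\<le> n} | {> n}\<close>, and summing these over \<open>n\<close> uses \<open>\<Sum>\<^sub>m P(X > m) = r\<close>.
  Hence \<open>\<pi>\<^sub>\<rho>\<close> puts mass \<open>\<rho>\<close> on the positive states, the nonlinear rate stays
  \<open>\<rho>\<close> forever, and the nonlinear process is the queue itself. The level-crossing equations
  also determine \<open>\<nu>\<close> recursively from \<open>\<nu>(0)\<close> (as \<open>a(0) > 0\<close>), which gives uniqueness,
  forces \<open>r < 1\<close>, and for \<open>r < 1\<close> yields an invariant law of total mass at most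
  \<open>1/(1 - r)\<close> before normalisation.
\<close>

lemma sum_Cauchy_product_le:
  fixes f g :: "nat \<Rightarrow> real"
  assumes "\<And>k. 0 \<le> f k" "\<And>k. 0 \<le> g k"
  shows "(\<Sum>n<N. \<Sum>k\<le>n. f k * g (n - k)) \<le> (\<Sum>k<N. f k) * (\<Sum>k<N. g k)"
proof -
  have "(\<Sum>n<N. \<Sum>k\<le>n. f k * g (n - k)) = (\<Sum>(i,j)\<in>{(i,j). i + j < N}. f i * g j)"
    by (rule sum.triangle_reindex[symmetric])
  also have "\<dots> \<le> (\<Sum>(i,j)\<in>{..<N} \<times> {..<N}. f i * g j)"
    by (rule sum_mono2) (auto intro!: mult_nonneg_nonneg assms)
  also have "\<dots> = (\<Sum>k<N. f k) * (\<Sum>k<N. g k)"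
    by (simp add: sum_product sum.Sigma)
  finally show ?thesis .
qed

locale arrival_dist =
  fixes a :: "nat \<Rightarrow> real" and r :: real
  assumes a_nonneg: "\<And>i. 0 \<le> a i"
    and a_sums: "a sums 1"
    and a_0_pos: "0 < a 0"
    and mean_sums: "(\<lambda>i. real i * a i) sums r"
begin

definition mass_upto :: "nat \<Rightarrow> real" where "mass_upto m = (\<Sum>i\<le>m. a i)"

definition tail :: "nat \<Rightarrow> real" where "tail m = 1 - mass_upto m"

lemma mass_upto_0: "mass_upto 0 = a 0"
  by (simp add: mass_upto_def)

lemma mass_upto_Suc: "mass_upto (Suc m) = mass_upto m + a (Suc m)"
  by (simp add: mass_upto_def)

lemma tail_0: "tail 0 = 1 - a 0"
  by (simp add: tail_def mass_upto_0)

lemma tail_Suc: "tail m = a (Suc m) + tail (Suc m)"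
  by (simp add: tail_def mass_upto_Suc)

lemma tail_eq_suminf: "tail m = (\<Sum>n. a (n + Suc m))"
proof -
  have "suminf a = (\<Sum>n. a (n + Suc m)) + (\<Sum>i<Suc m. a i)"
    using a_sums by (intro suminf_split_initial_segment) (simp add: sums_iff)
  then show ?thesis
    using a_sums by (simp add: tail_def mass_upto_def sums_iff lessThan_Suc_atMost)
qed

lemma tail_nonneg: "0 \<le> tail m"
  unfolding tail_eq_suminf using a_sums
  by (intro suminf_nonneg summable_ignore_initial_segment a_nonneg) (simp_all add: sums_iff)

lemma sum_tail_eq: "(\<Sum>m<N. tail m) = (\<Sum>i\<le>N. real i * a i) + real N * tail N"
proof (induction N)
  case (Suc N)
  then show ?case
    using tail_Suc[of N] by (simp add: algebra_simps)
qed simp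

lemma mult_tail_le: "real N * tail N \<le> r - (\<Sum>i\<le>N. real i * a i)"
proof -
  have summable_a: "summable a" and summable_mean: "summable (\<lambda>i. real i * a i)"
    using a_sums mean_sums by (simp_all add: sums_iff)
  have "r - (\<Sum>i\<le>N. real i * a i) = (\<Sum>n. real (n + Suc N) * a (n + Suc N))"
    using suminf_split_initial_segment[OF summable_mean, of "Suc N"] mean_sums
    by (simp add: sums_iff lessThan_Suc_atMost)
  moreover have "real N * tail N = (\<Sum>n. real N * a (n + Suc N))"
    unfolding tail_eq_suminf
    by (intro suminf_mult[symmetric] summable_ignore_initial_segment summable_a)
  moreover have "(\<Sum>n. real N * a (n + Suc N)) \<le> (\<Sum>n. real (n + Suc N) * a (n + Suc N))"
    using summable_ignore_initial_segment[OF summable_mean, of "Suc N"]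
      summable_ignore_initial_segment[OF summable_a, of "Suc N"]
    by (intro suminf_le) (auto intro!: mult_right_mono a_nonneg summable_mult)
  ultimately show ?thesis
    by simp
qed

lemma tail_sums: "tail sums r"
  unfolding sums_def
proof (rule tendsto_sandwich[of "\<lambda>N. \<Sum>i\<le>N. real i * a i" _ _ "\<lambda>_. r"])
  show "\<forall>\<^sub>F N in sequentially. (\<Sum>i\<le>N. real i * a i) \<le> (\<Sum>m<N. tail m)"
    by (intro always_eventually allI) (simp add: sum_tail_eq tail_nonneg)
  show "\<forall>\<^sub>F N in sequentially. (\<Sum>m<N. tail m) \<le> r"
    using mult_tail_le by (intro always_eventually allI) (simp add: sum_tail_eq algebra_simps)
  have "(\<lambda>N. \<Sum>i<Suc N. real i * a i) \<longlonglongrightarrow> r"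
    using mean_sums by (intro LIMSEQ_Suc) (simp add: sums_def)
  then show "(\<lambda>N. \<Sum>i\<le>N. real i * a i) \<longlonglongrightarrow> r"
    by (simp add: lessThan_Suc_atMost)
qed simp

lemma tail_summable: "summable tail"
  using tail_sums by (simp add: sums_iff)

definition balance :: "(nat \<Rightarrow> real) \<Rightarrow> nat \<Rightarrow> bool" where
  "balance \<nu> m \<longleftrightarrow> \<nu> m = \<nu> 0 * a m + (\<Sum>j\<le>m. \<nu> (Suc j) * a (m - j))"

definition cumulative_balance :: "(nat \<Rightarrow> real) \<Rightarrow> nat \<Rightarrow> bool" where
  "cumulative_balance \<nu> n \<longleftrightarrow>
     (\<Sum>m\<le>n. \<nu> m) = \<nu> 0 * mass_upto n + (\<Sum>k\<le>n. \<nu> (Suc k) * mass_upto (n - k))"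

text \<open>Flow across the cut between levels \<open>n\<close> and \<open>n + 1\<close>: down by one service from
  \<open>n + 1\<close>, up by more than \<open>n - k\<close> arrivals after a service from \<open>k + 1\<close> (or more
  than \<open>n\<close> arrivals at the empty state).\<close>
definition cut_balance :: "(nat \<Rightarrow> real) \<Rightarrow> nat \<Rightarrow> bool" where
  "cut_balance \<nu> n \<longleftrightarrow> \<nu> (Suc n) = \<nu> 0 * tail n + (\<Sum>k\<le>n. \<nu> (Suc k) * tail (n - k))"

lemma sum_mass_upto_Suc:
  "(\<Sum>k\<le>Suc n. f k * mass_upto (Suc n - k)) =
     (\<Sum>k\<le>n. f k * mass_upto (n - k)) + (\<Sum>k\<le>Suc n. f k * a (Suc n - k))"
proof -
  have "(\<Sum>k\<le>n. f k * mass_upto (Suc n - k)) = (\<Sum>k\<le>n. f k * mass_upto (n - k) + f k * a (Suc n - k))"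
    by (rule sum.cong) (auto simp: Suc_diff_le mass_upto_Suc algebra_simps)
  then show ?thesis
    by (simp add: sum.distrib mass_upto_0 algebra_simps)
qed

lemma balance_iff_cumulative_balance:
  "(\<forall>m. balance \<nu> m) \<longleftrightarrow> (\<forall>n. cumulative_balance \<nu> n)"
proof -
  have step: "cumulative_balance \<nu> (Suc n) \<longleftrightarrow> balance \<nu> (Suc n)"
    if "cumulative_balance \<nu> n" for n
    using that unfolding cumulative_balance_def balance_def sum_mass_upto_Suc[of "\<lambda>k. \<nu> (Suc k)"]
    by (auto simp: mass_upto_Suc algebra_simps)
  have base: "cumulative_balance \<nu> 0 \<longleftrightarrow> balance \<nu> 0"
    by (auto simp: cumulative_balance_def balance_def mass_upto_0 algebra_simps)
  show ?thesis
  proof safe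
    fix n assume "\<forall>m. balance \<nu> m"
    then show "cumulative_balance \<nu> n"
      using base step by (induction n) auto
  next
    fix m assume "\<forall>n. cumulative_balance \<nu> n"
    then show "balance \<nu> m"
      using base step by (cases m) auto
  qed
qed

lemma cumulative_balance_iff_cut_balance: "cumulative_balance \<nu> n \<longleftrightarrow> cut_balance \<nu> n"
proof -
  have "(\<Sum>m\<le>n. \<nu> m) + \<nu> (Suc n) = \<nu> 0 + (\<Sum>k\<le>n. \<nu> (Suc k))"
    using sum.atMost_Suc[of \<nu> n] sum.atMost_Suc_shift[of \<nu> n] by simp
  moreover have "(\<Sum>k\<le>n. \<nu> (Suc k) * tail (n - k)) =
      (\<Sum>k\<le>n. \<nu> (Suc k)) - (\<Sum>k\<le>n. \<nu> (Suc k) * mass_upto (n - k))"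
    by (simp add: tail_def algebra_simps sum_subtractf)
  ultimately show ?thesis
    unfolding cumulative_balance_def cut_balance_def by (auto simp: tail_def algebra_simps)
qed

lemma balance_iff_cut_balance: "(\<forall>m. balance \<nu> m) \<longleftrightarrow> (\<forall>n. cut_balance \<nu> n)"
  by (simp add: balance_iff_cumulative_balance cumulative_balance_iff_cut_balance)

lemma cut_balance_iff:
  "cut_balance \<nu> n \<longleftrightarrow> \<nu> (Suc n) * a 0 = \<nu> 0 * tail n + (\<Sum>k<n. \<nu> (Suc k) * tail (n - k))"
  by (simp add: cut_balance_def lessThan_Suc_atMost[symmetric] tail_0 algebra_simps)

lemma cut_balance_unique:
  assumes "\<And>n. cut_balance \<nu> n" "\<And>n. cut_balance \<mu> n" "\<nu> 0 = \<mu> 0"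
  shows "\<nu> n = \<mu> n"
proof (induction n rule: less_induct)
  case (less n)
  show ?case
  proof (cases n)
    case (Suc m)
    have "(\<Sum>k<m. \<nu> (Suc k) * tail (m - k)) = (\<Sum>k<m. \<mu> (Suc k) * tail (m - k))"
      using less Suc by (intro sum.cong) auto
    then have "\<nu> (Suc m) * a 0 = \<mu> (Suc m) * a 0"
      using assms(1)[of m] assms(2)[of m] assms(3) unfolding cut_balance_iff by simp
    then show ?thesis
      using a_0_pos Suc by simp
  qed (use assms in simp)
qed

lemma cut_balance_prob_0:
  assumes cut: "\<And>n. cut_balance \<nu> n" and nonneg: "\<And>n. 0 \<le> \<nu> n" and "\<nu> sums 1"
  shows "\<nu> 0 = 1 - r"
proof -
  have sums_Suc: "(\<lambda>n. \<nu> (Suc n)) sums (1 - \<nu> 0)"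
    using \<open>\<nu> sums 1\<close> by (simp add: sums_Suc_iff)
  have "(\<lambda>n. \<Sum>k\<le>n. \<nu> (Suc k) * tail (n - k)) sums ((\<Sum>k. \<nu> (Suc k)) * (\<Sum>k. tail k))"
    using sums_Suc nonneg tail_summable tail_nonneg
    by (intro Cauchy_product_sums) (simp_all add: sums_iff)
  then have "(\<lambda>n. \<nu> 0 * tail n + (\<Sum>k\<le>n. \<nu> (Suc k) * tail (n - k))) sums (\<nu> 0 * r + (1 - \<nu> 0) * r)"
    using sums_Suc tail_sums by (intro sums_add sums_mult) (simp_all add: sums_iff)
  moreover have "(\<lambda>n. \<nu> (Suc n)) = (\<lambda>n. \<nu> 0 * tail n + (\<Sum>k\<le>n. \<nu> (Suc k) * tail (n - k)))"
    using cut unfolding cut_balance_def by blast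
  ultimately have "1 - \<nu> 0 = \<nu> 0 * r + (1 - \<nu> 0) * r"
    using sums_Suc sums_unique2 by metis
  then show ?thesis
    by (simp add: algebra_simps)
qed

text \<open>For \<open>r \<ge> 1\<close> the mass \<open>1 - r\<close> at \<open>0\<close> vanishes, and then so does the
  whole recursively determined law.\<close>
lemma cut_balance_rate_less_1:
  assumes cut: "\<And>n. cut_balance \<nu> n" and nonneg: "\<And>n. 0 \<le> \<nu> n" and "\<nu> sums 1"
  shows "r < 1"
proof (rule ccontr)
  assume "\<not> r < 1"
  then have "\<nu> 0 = 0"
    using cut_balance_prob_0[OF assms] nonneg[of 0] by simp
  then have "\<nu> = (\<lambda>_. 0)"
    using cut_balance_unique[OF cut, of "\<lambda>_. 0"] by (auto simp: cut_balance_def)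
  with \<open>\<nu> sums 1\<close> show False
    using sums_unique2[OF \<open>\<nu> sums 1\<close>, of 0] by simp
qed

end

locale stable_arrival_dist = arrival_dist +
  assumes rate_less_1: "r < 1"
begin

fun cut_solution :: "nat \<Rightarrow> real" where
  "cut_solution 0 = 1"
| "cut_solution (Suc n) =
     (tail n + (\<Sum>k<n. cut_solution (Suc k) * tail (n - k))) / a 0"

declare cut_solution.simps(2)[simp del]

lemma cut_balance_cut_solution: "cut_balance cut_solution n"
  unfolding cut_balance_iff cut_solution.simps(2)[of n] using a_0_pos by simp

lemma cut_solution_nonneg: "0 \<le> cut_solution n"
proof (induction n rule: less_induct)
  case (less n)
  show ?case
  proof (cases n)
    case (Suc m)
    show ?thesis
      unfolding Suc cut_solution.simps(2)[of m] using less Suc a_0_pos tail_nonneg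
      by (auto intro!: divide_nonneg_pos add_nonneg_nonneg sum_nonneg mult_nonneg_nonneg)
  qed simp
qed

text \<open>Summing the cut balance over \<open>n < N\<close> bounds the partial sums \<open>S\<close> by \<open>S \<le> r + S r\<close>.\<close>
lemma sum_cut_solution_le: "(\<Sum>n<N. cut_solution (Suc n)) \<le> r / (1 - r)"
proof -
  let ?S = "\<Sum>n<N. cut_solution (Suc n)"
  have tail_partial: "(\<Sum>n<N. tail n) \<le> r"
    using sum_le_suminf[OF tail_summable, of "{..<N}"] tail_nonneg tail_sums by (simp add: sums_iff)
  have "cut_solution (Suc n) = tail n + (\<Sum>k\<le>n. cut_solution (Suc k) * tail (n - k))" for n
    using cut_balance_cut_solution[of n] unfolding cut_balance_def by simp
  then have "?S = (\<Sum>n<N. tail n + (\<Sum>k\<le>n. cut_solution (Suc k) * tail (n - k)))"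
    by (rule sum.cong[OF refl])
  also have "\<dots> = (\<Sum>n<N. tail n) + (\<Sum>n<N. \<Sum>k\<le>n. cut_solution (Suc k) * tail (n - k))"
    by (rule sum.distrib)
  also have "\<dots> \<le> r + ?S * (\<Sum>n<N. tail n)"
    using tail_partial
    by (intro add_mono sum_Cauchy_product_le) (auto intro: cut_solution_nonneg tail_nonneg)
  also have "\<dots> \<le> r + ?S * r"
    using tail_partial by (intro add_left_mono mult_left_mono sum_nonneg cut_solution_nonneg) auto
  finally have "?S * (1 - r) \<le> r"
    by (simp add: algebra_simps)
  then show ?thesis
    using rate_less_1 by (simp add: field_simps)
qed

lemma cut_solution_summable: "summable cut_solution"
proof -
  have "summable (\<lambda>n. cut_solution (Suc n))"
    by (rule summableI_nonneg_bounded[OF cut_solution_nonneg sum_cut_solution_le])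
  then show ?thesis
    by (simp only: summable_Suc_iff)
qed

definition stationary_dist :: "nat \<Rightarrow> real" where
  "stationary_dist n = cut_solution n / suminf cut_solution"

lemma suminf_cut_solution_pos: "0 < suminf cut_solution"
  using sum_le_suminf[OF cut_solution_summable, of "{0}"] cut_solution_nonneg by simp

lemma stationary_dist_nonneg: "0 \<le> stationary_dist n"
  using cut_solution_nonneg suminf_cut_solution_pos by (simp add: stationary_dist_def)

lemma stationary_dist_sums: "stationary_dist sums 1"
  using sums_divide[OF summable_sums[OF cut_solution_summable], of "suminf cut_solution"]
    suminf_cut_solution_pos
  by (simp add: stationary_dist_def[abs_def])

lemma cut_balance_stationary_dist: "cut_balance stationary_dist n"
proof -
  have "cut_solution (Suc n) * a 0 / suminf cut_solution =
      (cut_solution 0 * tail n + (\<Sum>k<n. cut_solution (Suc k) * tail (n - k))) / suminf cut_solution"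
    using cut_balance_cut_solution[of n] by (simp add: cut_balance_iff)
  then show ?thesis
    unfolding cut_balance_iff stationary_dist_def
    by (simp add: add_divide_distrib sum_divide_distrib)
qed

end

lemma pmf_map_add_const:
  "pmf (map_pmf (\<lambda>k. (c::nat) + k) P) m = (if c \<le> m then pmf P (m - c) else 0)"
proof (cases "c \<le> m")
  case True
  have "pmf (map_pmf (\<lambda>k. c + k) P) (c + (m - c)) = pmf P (m - c)"
    by (rule pmf_map_inj') (auto simp: inj_def)
  with True show ?thesis
    by simp
qed (auto simp: pmf_eq_0_set_pmf)

lemma pmf_step_pmf:
  "pmf (step_pmf r n) m =
     (if n - (if n > 0 then 1 else 0) \<le> m then pmf (pois r) (m - (n - (if n > 0 then 1 else 0))) else 0)"
  unfolding step_pmf_def by (rule pmf_map_add_const)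

lemma pmf_bind_step_pmf:
  "pmf (bind_pmf \<nu> (step_pmf r)) m =
     pmf \<nu> 0 * pmf (pois r) m + (\<Sum>j\<le>m. pmf \<nu> (Suc j) * pmf (pois r) (m - j))"
proof -
  have "pmf (bind_pmf \<nu> (step_pmf r)) m = (\<Sum>x\<le>Suc m. pmf (step_pmf r x) m * pmf \<nu> x)"
    unfolding pmf_bind
    by (rule integral_measure_pmf_real) (auto simp: pmf_step_pmf split: if_splits)
  also have "\<dots> = pmf (step_pmf r 0) m * pmf \<nu> 0 + (\<Sum>j\<le>m. pmf (step_pmf r (Suc j)) m * pmf \<nu> (Suc j))"
    by (rule sum.atMost_Suc_shift)
  also have "\<dots> = pmf \<nu> 0 * pmf (pois r) m + (\<Sum>j\<le>m. pmf \<nu> (Suc j) * pmf (pois r) (m - j))"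
    by (auto simp: pmf_step_pmf intro!: sum.cong)
  finally show ?thesis .
qed

lemma pmf_sums_1: "pmf (p :: nat pmf) sums 1"
proof -
  have "(\<Sum>n. ennreal (pmf p n)) = 1"
    using nn_integral_pmf[where p=p and A=UNIV] by (simp add: nn_integral_count_space_nat)
  then have "summable (pmf p)" and "ennreal (\<Sum>n. pmf p n) = 1"
    using summable_suminf_not_top[of "pmf p"] suminf_ennreal[of "pmf p"] by auto
  then show ?thesis
    by (simp add: sums_iff)
qed

lemma pmf_pois_Suc:
  assumes "0 \<le> r"
  shows "real (Suc i) * pmf (pois r) (Suc i) = r * pmf (pois r) i"
proof (cases "r = 0")
  case False
  with assms have "0 < r"
    by simp
  have "real (Suc i) * (r ^ Suc i / fact (Suc i)) = r * (r ^ i / fact i)"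
    by (simp del: of_nat_Suc)
  with \<open>0 < r\<close> show ?thesis
    by (simp add: pois_def del: of_nat_Suc)
qed (simp add: pois_def)

lemma arrival_dist_pois:
  assumes "0 \<le> r"
  shows "arrival_dist (pmf (pois r)) r"
proof
  show "0 < pmf (pois r) 0"
    using assms by (simp add: pois_def)
  have "(\<lambda>i. real (Suc i) * pmf (pois r) (Suc i)) sums r"
    using sums_mult[OF pmf_sums_1, of r] by (simp only: pmf_pois_Suc[OF assms]) simp
  then show "(\<lambda>i. real i * pmf (pois r) i) sums r"
    using sums_Suc_iff[of "\<lambda>i. real i * pmf (pois r) i" r] by (simp del: of_nat_Suc)
qed (simp_all add: pmf_sums_1)

context
  fixes r :: real
  assumes rate_nonneg: "0 \<le> r"
begin

interpretation arrival_dist "pmf (pois r)" r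
  by (rule arrival_dist_pois[OF rate_nonneg])

lemma md1_invariant_iff_cut_balance: "md1_invariant r \<nu> \<longleftrightarrow> (\<forall>n. cut_balance (pmf \<nu>) n)"
  unfolding md1_invariant_def balance_iff_cut_balance[symmetric] balance_def pmf_eq_iff
    pmf_bind_step_pmf
  by (intro iff_allI) (rule eq_commute)

lemma md1_invariant_pmf_0: "md1_invariant r \<nu> \<Longrightarrow> pmf \<nu> 0 = 1 - r"
  by (rule cut_balance_prob_0) (simp_all add: md1_invariant_iff_cut_balance pmf_sums_1)

lemma md1_invariant_rate_less_1: "md1_invariant r \<nu> \<Longrightarrow> r < 1"
  using cut_balance_rate_less_1[of "pmf \<nu>"] by (simp add: md1_invariant_iff_cut_balance pmf_sums_1)

lemma md1_invariant_unique: "md1_invariant r \<nu> \<Longrightarrow> md1_invariant r \<mu> \<Longrightarrow> \<nu> = \<mu>"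
  by (rule pmf_eqI, rule cut_balance_unique)
     (simp_all add: md1_invariant_iff_cut_balance md1_invariant_pmf_0)

lemma md1_invariant_exists:
  assumes "r < 1"
  shows "\<exists>\<nu>. md1_invariant r \<nu>"
proof -
  interpret stable_arrival_dist "pmf (pois r)" r
    by unfold_locales (rule assms)
  have "(\<integral>\<^sup>+x. ennreal (stationary_dist x) \<partial>count_space UNIV) = 1"
    by (simp add: nn_integral_count_space_nat
        suminf_ennreal_eq[OF stationary_dist_nonneg stationary_dist_sums])
  then have "pmf (embed_pmf stationary_dist) = stationary_dist"
    using stationary_dist_nonneg by (intro ext pmf_embed_pmf)
  then have "md1_invariant r (embed_pmf stationary_dist)"
    by (simp add: md1_invariant_iff_cut_balance cut_balance_stationary_dist)
  then show ?thesis ..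
qed

lemma md1_invariant_md1_pi: "r < 1 \<Longrightarrow> md1_invariant r (md1_pi r)"
  unfolding md1_pi_def
  by (rule theI') (use md1_invariant_exists md1_invariant_unique in blast)

end

lemma pos_prob_eq: "pos_prob \<nu> = 1 - pmf \<nu> 0"
proof -
  have "{n::nat. n > 0} = space (measure_pmf \<nu>) - {0}"
    by auto
  then show ?thesis
    unfolding pos_prob_def using measure_pmf.prob_compl[of "{0}" \<nu>]
    by (simp add: measure_pmf_single)
qed

lemma pos_prob_nonneg: "0 \<le> pos_prob \<nu>"
  by (simp add: pos_prob_def)

lemma nl_marg_invariant:
  "md1_invariant (pos_prob \<mu>) \<mu> \<Longrightarrow> nl_marg \<mu> t = \<mu>"
  by (induction t) (simp_all add: md1_invariant_def)

lemma nl_path_eq_md1_path: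
  "md1_invariant (pos_prob \<mu>) \<mu> \<Longrightarrow> nl_path \<mu> n = md1_path (pos_prob \<mu>) \<mu> n"
  by (induction n) (simp_all add: nl_rho_def nl_marg_invariant)

lemma length_md1_path: "xs \<in> set_pmf (md1_path r \<mu> n) \<Longrightarrow> length xs = Suc n"
  by (induction n arbitrary: xs) auto

lemma map_last_md1_path:
  assumes "md1_invariant r \<mu>"
  shows "map_pmf last (md1_path r \<mu> n) = \<mu>"
proof (induction n)
  case (Suc n)
  have "map_pmf last (md1_path r \<mu> (Suc n)) = bind_pmf (map_pmf last (md1_path r \<mu> n)) (step_pmf r)"
    by (simp add: map_bind_pmf bind_map_pmf map_pmf_comp)
  with Suc assms show ?case
    by (simp add: md1_invariant_def)
qed (simp add: map_pmf_comp)

lemma drop_eq_last: "length xs = Suc k \<Longrightarrow> drop k xs = [last xs]"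
  by (cases xs rule: rev_cases) auto

lemma md1_path_shift:
  assumes "md1_invariant r \<mu>"
  shows "map_pmf (drop k) (md1_path r \<mu> (k + n)) = md1_path r \<mu> n"
proof (induction n)
  case 0
  have "map_pmf (drop k) (md1_path r \<mu> k) = map_pmf (\<lambda>x. [x]) (map_pmf last (md1_path r \<mu> k))"
    unfolding map_pmf_comp
    by (rule map_pmf_cong[OF refl]) (auto dest!: length_md1_path simp: drop_eq_last)
  then show ?case
    by (simp add: map_last_md1_path[OF assms])
next
  case (Suc n)
  let ?step = "\<lambda>xs. map_pmf (\<lambda>y. xs @ [y]) (step_pmf r (last xs))"
  have "map_pmf (drop k) (md1_path r \<mu> (k + Suc n)) =
      bind_pmf (md1_path r \<mu> (k + n)) (\<lambda>xs. ?step (drop k xs))"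
    unfolding add_Suc_right md1_path.simps map_bind_pmf
    by (rule bind_pmf_cong[OF refl]) (auto dest!: length_md1_path simp: map_pmf_comp last_drop)
  also have "\<dots> = bind_pmf (map_pmf (drop k) (md1_path r \<mu> (k + n))) ?step"
    by (simp add: bind_map_pmf)
  also have "\<dots> = md1_path r \<mu> (Suc n)"
    using Suc by simp
  finally show ?case .
qed

lemma nl_stationary_imp_md1_invariant:
  assumes "nl_stationary \<mu>"
  shows "md1_invariant (pos_prob \<mu>) \<mu>"
proof -
  have "map_pmf (drop 1) (nl_path \<mu> (1 + 0)) = nl_path \<mu> 0"
    using assms unfolding nl_stationary_def by blast
  then have "map_pmf hd (map_pmf (\<lambda>x. [x]) (bind_pmf \<mu> (step_pmf (pos_prob \<mu>)))) =
      map_pmf hd (map_pmf (\<lambda>x. [x]) \<mu>)"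
    by (simp add: nl_rho_def map_bind_pmf bind_map_pmf map_pmf_comp)
  then show ?thesis
    unfolding md1_invariant_def by (simp add: map_pmf_comp)
qed

theorem lemma2p3:
  shows "(\<forall>\<rho>::real. 0 \<le> \<rho> \<and> \<rho> < 1 \<longrightarrow>
            (\<forall>n. nl_path (md1_pi \<rho>) n = md1_path \<rho> (md1_pi \<rho>) n)
          \<and> (\<forall>t. nl_rho (md1_pi \<rho>) t = \<rho>)
          \<and> nl_stationary (md1_pi \<rho>))
       \<and> (\<forall>\<mu>::nat pmf. nl_stationary \<mu> \<longrightarrow>
            (\<exists>\<rho>. 0 \<le> \<rho> \<and> \<rho> < 1 \<and> \<rho> = pos_prob \<mu> \<and> \<mu> = md1_pi \<rho>))"
proof (intro conjI allI impI)
  fix \<rho> :: real assume \<rho>: "0 \<le> \<rho> \<and> \<rho> < 1"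
  let ?\<pi> = "md1_pi \<rho>"
  have invariant: "md1_invariant \<rho> ?\<pi>"
    using md1_invariant_md1_pi \<rho> by blast
  have rate: "pos_prob ?\<pi> = \<rho>"
    using md1_invariant_pmf_0[OF _ invariant] \<rho> by (simp add: pos_prob_eq)
  show "nl_path ?\<pi> n = md1_path \<rho> ?\<pi> n" for n
    using nl_path_eq_md1_path invariant rate by simp
  show "nl_rho ?\<pi> t = \<rho>" for t
    using nl_marg_invariant invariant rate by (simp add: nl_rho_def)
  show "nl_stationary ?\<pi>"
    using nl_path_eq_md1_path md1_path_shift invariant rate by (simp add: nl_stationary_def)
next
  fix \<mu> :: "nat pmf" assume "nl_stationary \<mu>"
  then have invariant: "md1_invariant (pos_prob \<mu>) \<mu>"
    by (rule nl_stationary_imp_md1_invariant)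
  have stable: "pos_prob \<mu> < 1"
    using md1_invariant_rate_less_1[OF pos_prob_nonneg invariant] .
  have "\<mu> = md1_pi (pos_prob \<mu>)"
    using md1_invariant_unique[OF pos_prob_nonneg invariant]
      md1_invariant_md1_pi[OF pos_prob_nonneg stable] .
  then show "\<exists>\<rho>. 0 \<le> \<rho> \<and> \<rho> < 1 \<and> \<rho> = pos_prob \<mu> \<and> \<mu> = md1_pi \<rho>"
    using pos_prob_nonneg stable by blast
qed

end
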